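(* Let $A$ be an expanding cellular automaton (XCA) and let $w$ be an input of length $n$. Then after $t \in \mathbb{N}_0$ steps, $A$ has at most $a(t) = (n+3)2^t - 3$ active cells. Moreover, this upper bound is sharp (it is attained).
   Context: An XCA is a one-dimensional cellular automaton with state set $Q$, standard neighborhood $N=\{-1,0,1\}$, a local transition function $\delta\colon Q^N \to Q$, a quiescent state $q$, and a distinguished hidden state $\odot \in Q$; $\delta(\ell)=\odot$ is allowed only if $\ell(0)=\odot$. Cells not in state $q$ (and not hidden) are called active, and an active cell may never become quiescent. A global configuration is $c\colon \mathbb{Z}\to Q$. One global step works as follows: every visible cell $z$ is updated by the standard CA rule $\delta(c(z-1),c(z),c(z+1))$, and in addition, between every two adjacent cells $z,z+1$ there is a hidden cell (whose left and right neighbors are $c(z)$ and $c(z+1)$) which takes the state $\delta(c(z),\odot,c(z+1))$; the resulting sequence (with the new cells inserted between their two parents) is then contracted by deleting every cell whose state is $\odot$ (so hidden cells that did not leave state $\odot$ remain invisible and a fresh hidden cell again exists between any two adjacent visible cells in the next step). As a decider, $A$ starts with the input word $w$ written on cells $0,\dots,|w|-1$, surrounded on both sides by quiescent cells; initially there are thus $n$ active cells. *)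

theory Defs
  imports Main
begin

text \<open>An XCA: state set Q (finite), local rule delta on the standard neighbourhood
  (left, centre, right), quiescent state q, hidden state (odot), and the input alphabet.\<close>

record 'q xca =
  x_states :: "'q set"
  x_delta  :: "'q \<Rightarrow> 'q \<Rightarrow> 'q \<Rightarrow> 'q"
  x_quiescent :: 'q
  x_hidden :: 'q
  x_inputs :: "'q set"

definition xca :: "'q xca \<Rightarrow> bool" where
  "xca A \<longleftrightarrow>
     (let Q = x_states A; d = x_delta A; q = x_quiescent A; h = x_hidden A in
      finite Q \<and> q \<in> Q \<and> h \<in> Q \<and> q \<noteq> h \<and>
      x_inputs A \<subseteq> Q - {q, h} \<and>
      (\<forall>a\<in>Q. \<forall>b\<in>Q. \<forall>c\<in>Q. d a b c \<in> Q) \<and>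
      \<comment> \<open>only hidden cells may stay hidden\<close>
      (\<forall>a\<in>Q. \<forall>b\<in>Q. \<forall>c\<in>Q. d a b c = h \<longrightarrow> b = h) \<and>
      \<comment> \<open>active cells never become quiescent\<close>
      (\<forall>a\<in>Q. \<forall>b\<in>Q. \<forall>c\<in>Q. b \<noteq> q \<and> b \<noteq> h \<longrightarrow> d a b c \<noteq> q) \<and>
      \<comment> \<open>quiescence\<close>
      d q q q = q \<and> d q h q \<in> {q, h})"

text \<open>Configurations are finite lists of visible cells; every cell outside the list is
  quiescent. Cells further
  outside are quiescent with quiescent neighbours and remain quiescent or hidden.\<close>

definition xstep :: "'q xca \<Rightarrow> 'q list \<Rightarrow> 'q list" where
  "xstep A c =
     (let q = x_quiescent A; hd = x_hidden A; d = x_delta A;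
          p = q # q # c @ [q, q];
          v = (\<lambda>i. d (p ! (i - 1)) (p ! i) (p ! (i + 1)));
          h = (\<lambda>i. d (p ! i) hd (p ! (i + 1)))
      in filter (\<lambda>x. x \<noteq> hd)
           (concat (map (\<lambda>i. [v i, h i]) [1..<length c + 2]) @ [v (length c + 2)]))"

definition xrun :: "'q xca \<Rightarrow> 'q list \<Rightarrow> nat \<Rightarrow> 'q list" where
  "xrun A w t = (xstep A ^^ t) w"

definition active_count :: "'q xca \<Rightarrow> 'q list \<Rightarrow> nat" where
  "active_count A c = length (filter (\<lambda>x. x \<noteq> x_quiescent A \<and> x \<noteq> x_hidden A) c)"

end

theory Submission
  imports Defs
begin

text \<open>Only the L cells of a configuration and their two quiescent neighbours can be active after
  a step, so one step produces at most L + 2 visible and L + 1 newly inserted cells, i.e. at most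
  2L + 3 cells. Iterating, L + 3 at most doubles per step, which gives the bound (n + 3) 2^t - 3.
  It is attained by the automaton in which every cell next to an active cell becomes active: a
  solid block of L active cells becomes a solid block of 2L + 3 active cells.\<close>

lemma length_concat_map_pair: "length (concat (map (\<lambda>i. [f i, g i]) xs)) = 2 * length xs"
  by (induction xs) auto

lemma length_xstep_le: "length (xstep A c) \<le> 2 * length c + 3"
  unfolding xstep_def Let_def
  by (rule order_trans[OF length_filter_le])
     (simp only: length_append length_concat_map_pair length_upt list.size; simp)

lemma length_xrun_le: "length (xrun A w t) + 3 \<le> (length w + 3) * 2 ^ t"
proof (induction t)
  case 0
  then show ?case by (simp add: xrun_def)
next
  case (Suc t)
  have "length (xrun A w (Suc t)) \<le> 2 * length (xrun A w t) + 3"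
    using length_xstep_le[of A "xrun A w t"] by (simp add: xrun_def)
  with Suc show ?case by simp
qed

lemma active_count_le_length: "active_count A c \<le> length c"
  unfolding active_count_def by (rule length_filter_le)

lemma xstep_eq_replicate:
  fixes A :: "'q xca" and c :: "'q list"
  defines "p \<equiv> x_quiescent A # x_quiescent A # c @ [x_quiescent A, x_quiescent A]"
  assumes not_hidden: "x \<noteq> x_hidden A"
    and visible: "\<And>i. 1 \<le> i \<Longrightarrow> i \<le> length c + 2 \<Longrightarrow>
                    x_delta A (p ! (i - 1)) (p ! i) (p ! (i + 1)) = x"
    and hidden: "\<And>i. 1 \<le> i \<Longrightarrow> i \<le> length c + 1 \<Longrightarrow>
                    x_delta A (p ! i) (x_hidden A) (p ! (i + 1)) = x"
  shows "xstep A c = replicate (2 * length c + 3) x"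
proof -
  let ?v = "\<lambda>i. x_delta A (p ! (i - 1)) (p ! i) (p ! (i + 1))"
  let ?h = "\<lambda>i. x_delta A (p ! i) (x_hidden A) (p ! (i + 1))"
  let ?cells = "concat (map (\<lambda>i. [?v i, ?h i]) [1..<length c + 2]) @ [?v (length c + 2)]"
  have all_x: "\<forall>y\<in>set ?cells. y = x"
  proof
    fix y
    assume "y \<in> set ?cells"
    then have "(\<exists>i. 1 \<le> i \<and> i \<le> length c + 2 \<and> y = ?v i) \<or>
               (\<exists>i. 1 \<le> i \<and> i \<le> length c + 1 \<and> y = ?h i)"
      by (auto simp del: upt_Suc)
    then show "y = x"
      using visible hidden by blast
  qed
  have length_cells: "length ?cells = 2 * length c + 3"
    by (simp only: length_append length_concat_map_pair length_upt list.size)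
  have "xstep A c = filter (\<lambda>y. y \<noteq> x_hidden A) ?cells"
    unfolding xstep_def Let_def p_def ..
  also have "\<dots> = ?cells"
    using all_x not_hidden by (auto simp: filter_id_conv)
  also have "\<dots> = replicate (length ?cells) x"
    by (rule replicate_length_same[OF all_x, symmetric])
  also have "\<dots> = replicate (2 * length c + 3) x"
    unfolding length_cells ..
  finally show ?thesis .
qed

definition doubling_rule :: "nat \<Rightarrow> nat \<Rightarrow> nat \<Rightarrow> nat" where
  "doubling_rule a b c = (if a = 0 \<and> c = 0 \<and> b \<noteq> 2 then 0 else 2)"

definition doubling_xca :: "nat xca" where
  "doubling_xca = \<lparr>x_states = {0, 1, 2}, x_delta = doubling_rule, x_quiescent = 0,
                   x_hidden = 1, x_inputs = {2}\<rparr>"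

lemma xca_doubling_xca: "xca doubling_xca"
  unfolding xca_def doubling_xca_def doubling_rule_def Let_def by auto

lemma nth_padded_block:
  assumes "j \<le> L + 3"
  shows "(0 # 0 # replicate L (2::nat) @ [0, 0]) ! j = (if 2 \<le> j \<and> j \<le> L + 1 then 2 else 0)"
proof (cases j)
  case (Suc k)
  with assms show ?thesis
    by (cases k) (auto simp: nth_append less_Suc_eq_le nth_Cons split: nat.split)
qed simp

lemma xstep_doubling_block:
  assumes "L \<ge> 1"
  shows "xstep doubling_xca (replicate L 2) = replicate (2 * L + 3) 2"
proof -
  let ?q = "x_quiescent doubling_xca"
  let ?p = "?q # ?q # replicate L 2 @ [?q, ?q]"
  have p_eq: "?p = 0 # 0 # replicate L 2 @ [0, 0]"
    by (simp add: doubling_xca_def)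
  have "xstep doubling_xca (replicate L 2) = replicate (2 * length (replicate L (2::nat)) + 3) 2"
  proof (rule xstep_eq_replicate)
    fix i
    assume i: "1 \<le> i" "i \<le> length (replicate L (2::nat)) + 2"
    then have "i - 1 \<le> L + 3" "i \<le> L + 3" "i + 1 \<le> L + 3"
      by simp_all
    note padded = nth_padded_block[OF this(1)] nth_padded_block[OF this(2)]
      nth_padded_block[OF this(3)]
    show "x_delta doubling_xca (?p ! (i - 1)) (?p ! i) (?p ! (i + 1)) = 2"
      unfolding p_eq padded using i assms by (auto simp: doubling_xca_def doubling_rule_def)
  next
    fix i
    assume i: "1 \<le> i" "i \<le> length (replicate L (2::nat)) + 1"
    then have "i \<le> L + 3" "i + 1 \<le> L + 3"
      by simp_all
    note padded = nth_padded_block[OF this(1)] nth_padded_block[OF this(2)]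
    show "x_delta doubling_xca (?p ! i) (x_hidden doubling_xca) (?p ! (i + 1)) = 2"
      unfolding p_eq padded using i assms by (simp add: doubling_xca_def doubling_rule_def)
  qed (simp add: doubling_xca_def)
  then show ?thesis by simp
qed

lemma xrun_doubling_block:
  assumes "n \<ge> 1"
  shows "xrun doubling_xca (replicate n 2) t = replicate ((n + 3) * 2 ^ t - 3) 2"
proof (induction t)
  case 0
  then show ?case by (simp add: xrun_def)
next
  case (Suc t)
  have "(n + 3) * 2 ^ t \<ge> 4"
    using assms mult_le_mono[of 4 "n + 3" 1 "2 ^ t"] by simp
  with Suc show ?case
    using xstep_doubling_block[of "(n + 3) * 2 ^ t - 3"] by (simp add: xrun_def)
qed

theorem lemma1:
  shows "(\<forall>(A :: 'q xca) w t. xca A \<and> set w \<subseteq> x_inputs A \<longrightarrow>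
            active_count A (xrun A w t) \<le> (length w + 3) * 2 ^ t - 3)
       \<and> (\<exists>A :: nat xca. xca A \<and>
            (\<forall>n \<ge> 1. \<exists>w. set w \<subseteq> x_inputs A \<and> length w = n \<and>
               (\<forall>t. active_count A (xrun A w t) = (n + 3) * 2 ^ t - 3)))"
proof (intro conjI allI impI exI[of _ doubling_xca])
  fix A :: "'q xca" and w t
  show "active_count A (xrun A w t) \<le> (length w + 3) * 2 ^ t - 3"
    using active_count_le_length[of A "xrun A w t"] length_xrun_le[of A w t] by simp
next
  show "xca doubling_xca" by (rule xca_doubling_xca)
next
  fix n :: nat
  assume "n \<ge> 1"
  then show "\<exists>w. set w \<subseteq> x_inputs doubling_xca \<and> length w = n \<and>
               (\<forall>t. active_count doubling_xca (xrun doubling_xca w t) = (n + 3) * 2 ^ t - 3)"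
    by (intro exI[of _ "replicate n 2"])
       (simp add: xrun_doubling_block, simp add: active_count_def doubling_xca_def)
qed

end
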